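(* Let $a\in(0,1)$ and $p(z)=(z-a)\prod_{k=1}^{8}(z-z_k)$ with $|z_k|\le1$ and $z_k\ne a$, and write $p'(z)=9\prod_{j=1}^{8}(z-\zeta_j)$. Let $r_k=|a-z_k|$, $\rho_j=|a-\zeta_j|$, and suppose $\rho_j\ge1$ for all $j$. Then $$\prod_{j=1}^{8}|\zeta_j|\le\Big(\prod_{j=1}^{8}\rho_j\Big)\Big(a^2-1+\frac14\sum_{k=1}^{8}\frac{|z_k|^2-a^2}{r_k^2}\Big)^4.$$ *)

theory Defs
  imports "HOL-Analysis.Analysis" "HOL-Computational_Algebra.Polynomial"
begin

end

theory Submission
  imports Defs
begin

text \<open>
  Put \<open>p = (z - a) Q\<close> and \<open>p' = 9 Z\<close>. Evaluating \<open>p'\<close> and \<open>p''\<close> at \<open>a\<close> gives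
  \<open>Q(a) = 9 Z(a)\<close> and \<open>2 Q'(a) = 9 Z'(a)\<close>, so the logarithmic derivatives satisfy
  \<open>\<Sum>\<^sub>j 1/(a - \<zeta>\<^sub>j) = 2 \<Sum>\<^sub>k 1/(a - z\<^sub>k)\<close>. Writing \<open>w\<^sub>j = 1/(a - \<zeta>\<^sub>j)\<close>, we have
  \<open>|\<zeta>\<^sub>j| = \<rho>\<^sub>j |1 - a w\<^sub>j|\<close> with \<open>|w\<^sub>j| \<le> 1\<close>, hence \<open>|1 - a w\<^sub>j|\<^sup>2 \<le> 1 + a\<^sup>2 - 2a Re w\<^sub>j\<close>.
  By AM-GM the product of the \<open>|1 - a w\<^sub>j|\<close> is at most the fourth power of the mean of
  these bounds, and that mean is exactly the bracket on the right-hand side.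
\<close>

lemma poly_pderiv_prod_linear:
  fixes x :: "'b \<Rightarrow> 'a::field"
  assumes "finite S" "\<And>j. j \<in> S \<Longrightarrow> x j \<noteq> t"
  shows "poly (pderiv (\<Prod>j\<in>S. [:- x j, 1:])) t
           = poly (\<Prod>j\<in>S. [:- x j, 1:]) t * (\<Sum>j\<in>S. 1 / (t - x j))"
proof -
  have "poly (pderiv (\<Prod>j\<in>S. [:- x j, 1:])) t = (\<Sum>j\<in>S. \<Prod>i\<in>S-{j}. t - x i)"
    by (simp add: pderiv_prod poly_sum poly_prod pderiv_pCons)
  also have "\<dots> = (\<Sum>j\<in>S. (\<Prod>i\<in>S. t - x i) * (1 / (t - x j)))"
  proof (rule sum.cong[OF refl])
    fix j assume j: "j \<in> S"
    have "(\<Prod>i\<in>S. t - x i) = (t - x j) * (\<Prod>i\<in>S-{j}. t - x i)"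
      using assms(1) j by (simp add: prod.remove)
    then show "(\<Prod>i\<in>S-{j}. t - x i) = (\<Prod>i\<in>S. t - x i) * (1 / (t - x j))"
      using assms(2)[OF j] by (simp add: field_simps)
  qed
  also have "\<dots> = poly (\<Prod>j\<in>S. [:- x j, 1:]) t * (\<Sum>j\<in>S. 1 / (t - x j))"
    by (simp add: poly_prod sum_distrib_left)
  finally show ?thesis .
qed

lemma sum_inverse_critical_points_eq_twice:
  fixes a c :: "'a::field" and z \<zeta> :: "'b \<Rightarrow> 'a"
  assumes "finite S" "finite T"
    and p: "p = [:- a, 1:] * (\<Prod>k\<in>S. [:- z k, 1:])"
    and dp: "pderiv p = smult c (\<Prod>j\<in>T. [:- \<zeta> j, 1:])"
    and z_ne: "\<And>k. k \<in> S \<Longrightarrow> z k \<noteq> a"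
    and \<zeta>_ne: "\<And>j. j \<in> T \<Longrightarrow> \<zeta> j \<noteq> a"
  shows "(\<Sum>j\<in>T. 1 / (a - \<zeta> j)) = 2 * (\<Sum>k\<in>S. 1 / (a - z k))"
proof -
  define L Q Z where "L = [:- a, 1:]" "Q = (\<Prod>k\<in>S. [:- z k, 1:])" "Z = (\<Prod>j\<in>T. [:- \<zeta> j, 1:])"
  have pLQ: "p = L * Q" by (simp add: p L_Q_Z_def)
  have d1: "pderiv p = Q + L * pderiv Q"
    unfolding pLQ pderiv_mult by (simp add: L_Q_Z_def(1) pderiv_pCons)
  have d2: "pderiv (pderiv p) = 2 * pderiv Q + L * pderiv (pderiv Q)"
    unfolding d1 pderiv_add pderiv_mult L_Q_Z_def(1)
    by (simp add: pderiv_pCons algebra_simps mult_2)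
  have "poly L a = 0" by (simp add: L_Q_Z_def)
  then have QZ: "poly Q a = c * poly Z a"
    and QZ': "2 * poly (pderiv Q) a = c * poly (pderiv Z) a"
    using arg_cong[OF dp, of "\<lambda>r. poly r a"] arg_cong[OF dp, of "\<lambda>r. poly (pderiv r) a"] d1 d2
    by (simp_all add: L_Q_Z_def(3) pderiv_smult)
  have "poly Q a \<noteq> 0"
    unfolding L_Q_Z_def poly_prod using assms(1) z_ne by (auto simp: eq_commute[of a])
  moreover have "poly (pderiv Q) a = poly Q a * (\<Sum>k\<in>S. 1 / (a - z k))"
    unfolding L_Q_Z_def using assms(1) z_ne by (rule poly_pderiv_prod_linear)
  moreover have "poly (pderiv Z) a = poly Z a * (\<Sum>j\<in>T. 1 / (a - \<zeta> j))"
    unfolding L_Q_Z_def using assms(2) \<zeta>_ne by (rule poly_pderiv_prod_linear)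
  ultimately show ?thesis
    using QZ QZ' by (simp add: algebra_simps)
qed

lemma norm_ratio_eq_one_minus_Re_inverse:
  fixes a :: real and z :: complex
  assumes "z \<noteq> complex_of_real a"
  shows "((cmod z)\<^sup>2 - a\<^sup>2) / (cmod (complex_of_real a - z))\<^sup>2
           = 1 - 2 * a * Re (1 / (complex_of_real a - z))"
proof -
  have d: "(cmod (complex_of_real a - z))\<^sup>2 = (a - Re z)\<^sup>2 + (Im z)\<^sup>2"
    by (simp add: cmod_power2)
  have ne: "(a - Re z)\<^sup>2 + (Im z)\<^sup>2 \<noteq> 0"
    using assms d by (metis eq_iff_diff_eq_0 norm_eq_zero power_eq_0_iff)
  have re: "Re (1 / (complex_of_real a - z)) = (a - Re z) / ((a - Re z)\<^sup>2 + (Im z)\<^sup>2)"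
    by (simp add: Re_divide power2_eq_square)
  show ?thesis
    unfolding d re cmod_power2 using ne
    by (simp add: field_simps) (simp add: power2_eq_square algebra_simps)
qed

lemma sum_norm_ratio_eq:
  fixes a :: real and z :: "'b \<Rightarrow> complex"
  assumes "finite S" "\<And>k. k \<in> S \<Longrightarrow> z k \<noteq> complex_of_real a"
  shows "(\<Sum>k\<in>S. ((cmod (z k))\<^sup>2 - a\<^sup>2) / (cmod (complex_of_real a - z k))\<^sup>2)
           = card S - 2 * a * Re (\<Sum>k\<in>S. 1 / (complex_of_real a - z k))"
proof -
  have "(\<Sum>k\<in>S. ((cmod (z k))\<^sup>2 - a\<^sup>2) / (cmod (complex_of_real a - z k))\<^sup>2)
          = (\<Sum>k\<in>S. 1 - 2 * a * Re (1 / (complex_of_real a - z k)))"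
    using assms(2) by (intro sum.cong) (simp_all add: norm_ratio_eq_one_minus_Re_inverse)
  then show ?thesis
    by (simp add: sum_subtractf sum_distrib_left Re_sum)
qed

lemma norm_one_minus_mult_squared_le:
  fixes a :: real and w :: complex
  assumes "cmod w \<le> 1"
  shows "(cmod (1 - complex_of_real a * w))\<^sup>2 \<le> 1 + a\<^sup>2 - 2 * a * Re w"
proof -
  have "(Re w)\<^sup>2 + (Im w)\<^sup>2 \<le> 1"
    using assms by (simp add: cmod_power2[symmetric] power_le_one)
  then have "a\<^sup>2 * ((Re w)\<^sup>2 + (Im w)\<^sup>2) \<le> a\<^sup>2" by (simp add: mult_left_le)
  moreover have "(cmod (1 - complex_of_real a * w))\<^sup>2 = (1 - a * Re w)\<^sup>2 + (a * Im w)\<^sup>2"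
    by (simp add: cmod_power2)
  ultimately show ?thesis by (simp add: power2_eq_square algebra_simps)
qed

lemma norm_eq_norm_diff_mult_norm_one_minus_divide:
  fixes a \<zeta> :: "'a::real_normed_field"
  assumes "\<zeta> \<noteq> a"
  shows "norm \<zeta> = norm (a - \<zeta>) * norm (1 - a / (a - \<zeta>))"
proof -
  have "(a - \<zeta>) * (1 - a / (a - \<zeta>)) = - \<zeta>"
    using assms by (simp add: field_simps)
  then show ?thesis by (metis norm_minus_cancel norm_mult)
qed

lemma prod_le_mean_square_power:
  fixes u :: "'b \<Rightarrow> real"
  assumes "finite S" "card S = 2 * m" "\<And>j. j \<in> S \<Longrightarrow> u j \<ge> 0"
  shows "(\<Prod>j\<in>S. u j) \<le> ((\<Sum>j\<in>S. (u j)\<^sup>2) / card S) ^ m"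
proof (cases "m = 0")
  case True
  then show ?thesis using assms(1,2) by simp
next
  case False
  define n P M where "n = card S" "P = (\<Prod>j\<in>S. u j)" "M = (\<Sum>j\<in>S. (u j)\<^sup>2) / n"
  have "n > 0" "S \<noteq> {}" using assms(2) False by (auto simp: n_P_M_def)
  have "M \<ge> 0" by (simp add: n_P_M_def sum_nonneg)
  have "(\<Prod>j\<in>S. (u j)\<^sup>2) powr (1 / n) \<le> (\<Sum>j\<in>S. (u j)\<^sup>2 / n)"
    using arith_geom_mean[of S "\<lambda>j. (u j)\<^sup>2"] assms(1) \<open>S \<noteq> {}\<close> by (simp add: n_P_M_def)
  then have "root n (P\<^sup>2) \<le> M"
    using \<open>n > 0\<close>
    by (simp add: n_P_M_def root_powr_inverse prod_power_distrib sum_divide_distrib prod_nonneg)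
  then have "root n (P\<^sup>2) ^ n \<le> M ^ n"
    by (rule power_mono) (simp add: real_root_ge_zero)
  moreover have "root n (P\<^sup>2) ^ n = P\<^sup>2"
    using \<open>n > 0\<close> by (simp add: real_root_pow_pos2)
  moreover have "M ^ n = (M ^ m)\<^sup>2"
    unfolding n_P_M_def assms(2) by (simp add: power_mult[symmetric] mult.commute)
  ultimately have "P\<^sup>2 \<le> (M ^ m)\<^sup>2" by linarith
  then have "P \<le> M ^ m"
    by (rule power2_le_imp_le) (simp add: \<open>M \<ge> 0\<close>)
  then show ?thesis
    by (simp add: n_P_M_def)
qed

lemma prod_norm_one_minus_mult_le:
  fixes a :: real and w :: "'b \<Rightarrow> complex"
  assumes "finite S" "card S = 2 * m" "\<And>j. j \<in> S \<Longrightarrow> cmod (w j) \<le> 1"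
  shows "(\<Prod>j\<in>S. cmod (1 - complex_of_real a * w j))
           \<le> (1 + a\<^sup>2 - 2 * a * Re (\<Sum>j\<in>S. w j) / card S) ^ m"
proof (cases "S = {}")
  case True
  then show ?thesis using assms(2) by simp
next
  case False
  have "(\<Sum>j\<in>S. (cmod (1 - complex_of_real a * w j))\<^sup>2) \<le> (\<Sum>j\<in>S. 1 + a\<^sup>2 - 2 * a * Re (w j))"
    using assms(3) by (intro sum_mono norm_one_minus_mult_squared_le)
  also have "\<dots> = card S * (1 + a\<^sup>2 - 2 * a * Re (\<Sum>j\<in>S. w j) / card S)"
    using False assms(1) by (simp add: sum_subtractf sum.distrib Re_sum sum_distrib_left field_simps)
  finally have mean_le: "(\<Sum>j\<in>S. (cmod (1 - complex_of_real a * w j))\<^sup>2) / card S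
      \<le> 1 + a\<^sup>2 - 2 * a * Re (\<Sum>j\<in>S. w j) / card S"
    using False assms(1) by (simp add: divide_le_eq mult.commute)
  have "(\<Prod>j\<in>S. cmod (1 - complex_of_real a * w j))
      \<le> ((\<Sum>j\<in>S. (cmod (1 - complex_of_real a * w j))\<^sup>2) / card S) ^ m"
    using assms(1,2) by (rule prod_le_mean_square_power) simp
  also have "\<dots> \<le> (1 + a\<^sup>2 - 2 * a * Re (\<Sum>j\<in>S. w j) / card S) ^ m"
    by (rule power_mono[OF mean_le]) (simp add: sum_nonneg)
  finally show ?thesis .
qed

theorem lemma3p11:
  fixes a :: real and z \<zeta> :: "nat \<Rightarrow> complex" and p :: "complex poly"
  assumes a: "0 < a" "a < 1"
    and p_def: "p = [:- complex_of_real a, 1:] * (\<Prod>k=1..8. [:- z k, 1:])"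
    and z_disk: "\<And>k. k \<in> {1..8} \<Longrightarrow> cmod (z k) \<le> 1"
    and z_ne: "\<And>k. k \<in> {1..8} \<Longrightarrow> z k \<noteq> complex_of_real a"
    and dp: "pderiv p = smult 9 (\<Prod>j=1..8. [:- \<zeta> j, 1:])"
    and rho: "\<And>j. j \<in> {1..8} \<Longrightarrow> cmod (complex_of_real a - \<zeta> j) \<ge> 1"
  shows "(\<Prod>j=1..8. cmod (\<zeta> j)) \<le>
    (\<Prod>j=1..8. cmod (complex_of_real a - \<zeta> j)) *
    (a\<^sup>2 - 1 + (1/4) * (\<Sum>k=1..8. ((cmod (z k))\<^sup>2 - a\<^sup>2) / (cmod (complex_of_real a - z k))\<^sup>2)) ^ 4"
proof -
  let ?a = "complex_of_real a" and ?J = "{1..8::nat}"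
  define w where "w j = 1 / (?a - \<zeta> j)" for j
  define B where "B = a\<^sup>2 - 1 + (1/4) * (\<Sum>k\<in>?J. ((cmod (z k))\<^sup>2 - a\<^sup>2) / (cmod (?a - z k))\<^sup>2)"
  have \<zeta>_ne: "\<zeta> j \<noteq> ?a" if "j \<in> ?J" for j
    using rho[OF that] by force
  have "(\<Sum>j\<in>?J. w j) = 2 * (\<Sum>k\<in>?J. 1 / (?a - z k))"
    unfolding w_def using p_def dp z_ne \<zeta>_ne by (intro sum_inverse_critical_points_eq_twice) auto
  then have "B = 1 + a\<^sup>2 - 2 * a * Re (\<Sum>j\<in>?J. w j) / card ?J"
    using sum_norm_ratio_eq[of ?J z a] z_ne unfolding B_def by simp
  moreover have "cmod (w j) \<le> 1" if "j \<in> ?J" for j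
    using rho[OF that] by (simp add: w_def norm_divide divide_le_eq_1)
  ultimately have prod_le: "(\<Prod>j\<in>?J. cmod (1 - ?a * w j)) \<le> B ^ 4"
    using prod_norm_one_minus_mult_le[of ?J 4 w a] by simp
  have "cmod (\<zeta> j) = cmod (?a - \<zeta> j) * cmod (1 - ?a * w j)" if "j \<in> ?J" for j
    using norm_eq_norm_diff_mult_norm_one_minus_divide[OF \<zeta>_ne[OF that]] by (simp add: w_def)
  then have "(\<Prod>j\<in>?J. cmod (\<zeta> j)) = (\<Prod>j\<in>?J. cmod (?a - \<zeta> j)) * (\<Prod>j\<in>?J. cmod (1 - ?a * w j))"
    by (simp add: prod.distrib[symmetric])
  with prod_le show ?thesis
    unfolding B_def by (simp add: mult_left_mono prod_nonneg)
qed

end
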